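(* Let $M,m\in\mathbb{N}$ and $f=\prod_{i=1}^mf_i$ with $f_1,\dots,f_m$ entire functions. Then $$\min_{0\le t\le M}\nu^0_{\mathcal{A}_{q^{M-t}}\mathcal{D}_q^tf}(x)\ge\sum_{i=1}^m\min_{0\le t\le M}\nu^0_{\mathcal{A}_{q^{M-t}}\mathcal{D}_q^tf_i}(x)$$ for all $x\in\mathbb{C}$ with $|x|>\mathcal{R}(M,q)$.
   Context: Fix $q\in\mathbb{C}$ with $0<|q|<1$. Every $x\in\mathbb{C}$ is written uniquely as $x=\frac{z+z^{-1}}{2}$ with $|z|\ge 1$ (when $|z|=1$, $z=x+i\sqrt{1-x^2}$). $(\eta_q f)(x)=f\big(\tfrac{q^{1/2}z+q^{-1/2}z^{-1}}{2}\big)$, $(\eta_q^{-1}f)(x)=f\big(\tfrac{q^{-1/2}z+q^{1/2}z^{-1}}{2}\big)$, $\eta_q^{\pm k}$ the $k$-fold compositions; $(\eta_{q^{\pm k}}f)(x)=f\big(\tfrac{q^{\pm k/2}z+q^{\mp k/2}z^{-1}}{2}\big)$. $\mathcal{R}(M,q)>0$ is a constant such that for $|x|>\mathcal{R}(M,q)$ one has $\eta_q^{\pm k}f=\eta_{q^{\pm k}}f$ for $0\le k\le M$ and the shifts compose additively. Askey-Wilson operator $(\mathcal{D}_qf)(x)=\frac{(\eta_qf)(x)-(\eta_q^{-1}f)(x)}{\eta_qx-\eta_q^{-1}x}$ ($x\ne\pm1$; limit at $\pm1$), $\mathcal{D}_q^0f=f$, $\mathcal{D}_q^k=\mathcal{D}_q\circ\mathcal{D}_q^{k-1}$;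 $(\mathcal{A}_{q^k}f)(x)=\frac{(\eta_{q^k}f)(x)+(\eta_{q^{-k}}f)(x)}{2}$, $\mathcal{A}_{q^0}f=f$. $\nu^0_g(x)\ge0$ is the order of zero of $g$ at $x$. *)

theory Defs
  imports "HOL-Complex_Analysis.Complex_Analysis"
begin

text \<open>The parameter z of x: x = (z + 1/z)/2 with |z| >= 1; on the segment [-1,1]
  (where |z| = 1) the convention z = x + i sqrt(1 - x^2) is used.\<close>
definition zc :: "complex \<Rightarrow> complex" where
  "zc x = (if Im x = 0 \<and> \<bar>Re x\<bar> \<le> 1 then x + \<i> * complex_of_real (sqrt (1 - (Re x)\<^sup>2))
           else (THE z. 1 \<le> cmod z \<and> x = (z + inverse z) / 2))"

definition sig :: "complex \<Rightarrow> complex \<Rightarrow> complex" where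
  "sig s x = (s * zc x + inverse (s * zc x)) / 2"

text \<open>q^{1/2} is the principal square root; q^{k/2} := (q^{1/2})^k.\<close>
definition eta :: "complex \<Rightarrow> (complex \<Rightarrow> complex) \<Rightarrow> complex \<Rightarrow> complex" where
  "eta q f x = f (sig (csqrt q) x)"

definition etainv :: "complex \<Rightarrow> (complex \<Rightarrow> complex) \<Rightarrow> complex \<Rightarrow> complex" where
  "etainv q f x = f (sig (inverse (csqrt q)) x)"

text \<open>etaP q k f = eta_{q^k} f for an integer k (so eta_{q^{-k}} = etaP q (-k)).\<close>
definition etaP :: "complex \<Rightarrow> int \<Rightarrow> (complex \<Rightarrow> complex) \<Rightarrow> complex \<Rightarrow> complex" where
  "etaP q k f x = f (sig (csqrt q powi k) x)"

definition AW_quot :: "complex \<Rightarrow> (complex \<Rightarrow> complex) \<Rightarrow> complex \<Rightarrow> complex" where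
  "AW_quot q f x = (eta q f x - etainv q f x) / (eta q id x - etainv q id x)"

definition AW :: "complex \<Rightarrow> (complex \<Rightarrow> complex) \<Rightarrow> complex \<Rightarrow> complex" where
  "AW q f x = (if x = 1 \<or> x = -1 then Lim (at x) (AW_quot q f) else AW_quot q f x)"

definition Aop :: "complex \<Rightarrow> nat \<Rightarrow> (complex \<Rightarrow> complex) \<Rightarrow> complex \<Rightarrow> complex" where
  "Aop q k f x = (if k = 0 then f x else (etaP q (int k) f x + etaP q (- int k) f x) / 2)"

definition nu0 :: "(complex \<Rightarrow> complex) \<Rightarrow> complex \<Rightarrow> enat" where
  "nu0 g x = Sup {enat n | n. \<exists>h r. 0 < r \<and> h holomorphic_on ball x r \<and>
                    (\<forall>w\<in>ball x r. g w = (w - x) ^ n * h w)}"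

text \<open>The defining property of the constant R(M,q).\<close>
definition R_ok :: "complex \<Rightarrow> nat \<Rightarrow> real \<Rightarrow> bool" where
  "R_ok q M R \<longleftrightarrow> 0 < R \<and>
     (\<forall>y f. R < cmod y \<longrightarrow>
        (\<forall>k\<le>M. (eta q ^^ k) f y = etaP q (int k) f y \<and> (etainv q ^^ k) f y = etaP q (- int k) f y) \<and>
        (\<forall>a b::int. \<bar>a\<bar> \<le> int M \<and> \<bar>b\<bar> \<le> int M \<and> \<bar>a + b\<bar> \<le> int M \<longrightarrow>
           etaP q a (etaP q b f) y = etaP q (a + b) f y))"

end

theory Submission
  imports Defs
begin

text \<open>For M \<ge> 1 and |x| > R(M,q) the point x lies off the cut [-1,1], so each shift
  eta_{q^j}, |j| \<le> M, is holomorphic near x. At a shifted point D_q is the difference of the two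
  neighbouring shifts divided by a function that is holomorphic and nonzero near x, and A_{q^M}
  is the mean of the two extreme shifts. By induction on M, (w - x)^n divides every
  A_{q^{M-t}} D_q^t f (t \<le> M) near x iff it divides every eta_{q^j} f with |j| \<le> M, j \<equiv> M mod 2;
  for the converse, telescoping recovers the single shifts from their differences and A_{q^M}.
  Hence the minimum on the left equals the minimum over j of the orders of eta_{q^j} f. As
  eta_{q^j} is multiplicative, the order of eta_{q^j} (\<Prod> f_i) is at least the sum of those of
  the eta_{q^j} f_i, and minimising over j gives the claim.\<close>

definition joukowski :: "complex \<Rightarrow> complex" where
  "joukowski z = (z + inverse z) / 2"

lemma sig_eq_joukowski: "sig s x = joukowski (s * zc x)"
  by (simp add: sig_def joukowski_def)

lemma joukowski_inverse [simp]: "joukowski (inverse z) = joukowski z"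
  by (simp add: joukowski_def add.commute)

lemma joukowski_eq_iff:
  assumes "u \<noteq> 0" "v \<noteq> 0"
  shows "joukowski u = joukowski v \<longleftrightarrow> u = v \<or> u * v = 1"
proof
  assume "joukowski u = joukowski v"
  hence "(u - v) * (u * v - 1) * 2 = 0" using assms by (simp add: joukowski_def field_simps)
  thus "u = v \<or> u * v = 1" by auto
next
  assume "u = v \<or> u * v = 1"
  thus "joukowski u = joukowski v" by (metis joukowski_inverse inverse_unique)
qed

definition branch_cut :: "complex set" where
  "branch_cut = {t. Im t = 0 \<and> \<bar>Re t\<bar> \<le> 1}"

lemma joukowski_in_branch_cut:
  assumes "cmod v = 1"
  shows "joukowski v \<in> branch_cut"
proof -
  have "inverse v = cnj v" using divide_conv_cnj[OF assms, of 1] by (simp add: divide_inverse)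
  hence "joukowski v = of_real (Re v)" by (simp add: joukowski_def complex_eq_iff)
  moreover have "\<bar>Re v\<bar> \<le> 1" using abs_Re_le_cmod[of v] assms by simp
  ultimately show ?thesis by (simp add: branch_cut_def)
qed

lemma zc_on_branch_cut:
  assumes "y \<in> branch_cut"
  shows "cmod (zc y) = 1" "joukowski (zc y) = y"
proof -
  have im: "Im y = 0" and re: "\<bar>Re y\<bar> \<le> 1" using assms by (auto simp: branch_cut_def)
  have z: "zc y = Complex (Re y) (sqrt (1 - (Re y)\<^sup>2))"
    using im re by (simp add: zc_def complex_eq_iff)
  have "(Re y)\<^sup>2 \<le> 1" using re abs_le_square_iff[of "Re y" 1] by simp
  thus n: "cmod (zc y) = 1" unfolding z cmod_def by simp
  have "inverse (zc y) = cnj (zc y)" using divide_conv_cnj[OF n, of 1] by (simp add: divide_inverse)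
  thus "joukowski (zc y) = y" using im by (simp add: joukowski_def z complex_eq_iff)
qed

text \<open>Off the cut, zc is the holomorphic branch of the inverse of the Joukowski map
  selected by the principal square root.\<close>
definition joukowski_inv :: "complex \<Rightarrow> complex" where
  "joukowski_inv y = y * (1 + csqrt (1 - 1 / y\<^sup>2))"

lemma square_real_in_branch_cut:
  assumes "y\<^sup>2 = complex_of_real p" "0 < p" "p \<le> 1"
  shows "y \<in> branch_cut"
proof -
  have "Im (y\<^sup>2) = 0" "Re (y\<^sup>2) = p" using assms by auto
  hence a: "2 * Re y * Im y = 0" and b: "(Re y)\<^sup>2 - (Im y)\<^sup>2 = p"
    by (auto simp: power2_eq_square)
  have "Im y = 0"
  proof (rule ccontr)
    assume "Im y \<noteq> 0"
    hence "- (Im y)\<^sup>2 = p" using a b by simp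
    thus False using assms(2) zero_le_power2[of "Im y"] by linarith
  qed
  with b assms(3) have "(Re y)\<^sup>2 \<le> 1" by simp
  with \<open>Im y = 0\<close> show ?thesis by (simp add: branch_cut_def abs_square_le_1)
qed

lemma one_minus_inverse_square_notin_nonpos_Reals:
  assumes "y \<notin> branch_cut"
  shows "1 - 1 / y\<^sup>2 \<notin> \<real>\<^sub>\<le>\<^sub>0"
proof
  assume "1 - 1 / y\<^sup>2 \<in> \<real>\<^sub>\<le>\<^sub>0"
  then obtain t where t: "1 - 1 / y\<^sup>2 = of_real t" "t \<le> 0" by (auto elim: nonpos_Reals_cases)
  have "y \<noteq> 0" using assms by (auto simp: branch_cut_def)
  have "1 / y\<^sup>2 = of_real (1 - t)" using t by (simp add: algebra_simps)
  hence "y\<^sup>2 = of_real (1 / (1 - t))"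
    by (metis inverse_eq_divide inverse_inverse_eq of_real_inverse)
  moreover have "0 < 1 / (1 - t)" "1 / (1 - t) \<le> 1" using t by auto
  ultimately have "y \<in> branch_cut" by (rule square_real_in_branch_cut)
  with assms show False ..
qed

lemma joukowski_inv_correct:
  assumes "y \<notin> branch_cut"
  shows "1 \<le> cmod (joukowski_inv y)" "joukowski (joukowski_inv y) = y"
proof -
  have y0: "y \<noteq> 0" using assms by (auto simp: branch_cut_def)
  define c where "c = csqrt (1 - 1 / y\<^sup>2)"
  define b' where "b' = y * (1 - c)"
  have b: "joukowski_inv y = y * (1 + c)" by (simp add: joukowski_inv_def c_def)
  have "joukowski_inv y * b' = y\<^sup>2 * (1 - c\<^sup>2)"
    by (simp add: b b'_def power2_eq_square algebra_simps)
  also have "\<dots> = 1" using y0 by (simp add: c_def field_simps)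
  finally have prod: "joukowski_inv y * b' = 1" .
  hence inv: "inverse (joukowski_inv y) = b'" by (rule inverse_unique)
  have "cmod (1 - c) \<le> cmod (1 + c)"
  proof -
    have "0 \<le> Re c" unfolding c_def by (rule Re_csqrt)
    moreover have "(cmod (1 - c))\<^sup>2 = (1 - Re c)\<^sup>2 + (Im c)\<^sup>2"
      "(cmod (1 + c))\<^sup>2 = (1 + Re c)\<^sup>2 + (Im c)\<^sup>2" by (simp_all add: cmod_power2)
    ultimately have "(cmod (1 - c))\<^sup>2 \<le> (cmod (1 + c))\<^sup>2"
      by (simp add: power2_eq_square algebra_simps)
    thus ?thesis by (simp add: power2_le_iff_abs_le)
  qed
  hence "cmod b' \<le> cmod (joukowski_inv y)" by (simp add: b b'_def norm_mult mult_left_mono)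
  hence "cmod (joukowski_inv y) * cmod b' \<le> (cmod (joukowski_inv y))\<^sup>2"
    by (simp add: power2_eq_square mult_left_mono)
  moreover have "cmod (joukowski_inv y) * cmod b' = 1" using prod by (metis norm_mult norm_one)
  ultimately show "1 \<le> cmod (joukowski_inv y)" by (metis abs_norm_cancel abs_square_less_1 not_le)
  have "joukowski (joukowski_inv y) = (joukowski_inv y + b') / 2" by (simp add: joukowski_def inv)
  also have "\<dots> = y" by (simp add: b b'_def algebra_simps)
  finally show "joukowski (joukowski_inv y) = y" .
qed

lemma zc_eq_joukowski_inv:
  assumes "y \<notin> branch_cut"
  shows "zc y = joukowski_inv y"
proof -
  have "\<not> (Im y = 0 \<and> \<bar>Re y\<bar> \<le> 1)" using assms by (simp add: branch_cut_def)
  hence "zc y = (THE z. 1 \<le> cmod z \<and> y = (z + inverse z) / 2)"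
    unfolding zc_def by (rule if_not_P)
  also have "\<dots> = joukowski_inv y"
  proof (rule the_equality)
    show "1 \<le> cmod (joukowski_inv y) \<and> y = (joukowski_inv y + inverse (joukowski_inv y)) / 2"
      using joukowski_inv_correct[OF assms] by (simp add: joukowski_def)
    fix z assume "1 \<le> cmod z \<and> y = (z + inverse z) / 2"
    hence z: "1 \<le> cmod z \<and> y = joukowski z" by (simp add: joukowski_def)
    have "joukowski_inv y \<noteq> 0" using joukowski_inv_correct(1)[OF assms] by auto
    moreover have "z \<noteq> 0" using z by auto
    ultimately have "z = joukowski_inv y \<or> z * joukowski_inv y = 1"
      using joukowski_inv_correct(2)[OF assms] z joukowski_eq_iff by metis
    moreover have "z * joukowski_inv y \<noteq> 1"
    proof
      assume "z * joukowski_inv y = 1"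
      hence "cmod z * cmod (joukowski_inv y) = 1" by (metis norm_mult norm_one)
      moreover have "cmod z \<le> cmod z * cmod (joukowski_inv y)"
        using joukowski_inv_correct(1)[OF assms] by (simp add: mult_le_cancel_left1)
      ultimately have "cmod z = 1" using z by linarith
      hence "y \<in> branch_cut" using z joukowski_in_branch_cut by simp
      with assms show False ..
    qed
    ultimately show "z = joukowski_inv y" by simp
  qed
  finally show ?thesis .
qed

lemma zc_props: "1 \<le> cmod (zc y)" "joukowski (zc y) = y" "zc y \<noteq> 0"
proof -
  show "1 \<le> cmod (zc y)" "joukowski (zc y) = y"
    using zc_on_branch_cut[of y] joukowski_inv_correct[of y] zc_eq_joukowski_inv[of y]
    by (cases "y \<in> branch_cut"; simp)+
  thus "zc y \<noteq> 0" by auto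
qed

lemma zc_holomorphic:
  assumes "S \<inter> branch_cut = {}"
  shows "zc holomorphic_on S"
proof (rule holomorphic_transform)
  show "joukowski_inv holomorphic_on S"
    unfolding joukowski_inv_def[abs_def]
    using assms one_minus_inverse_square_notin_nonpos_Reals
    by (intro holomorphic_intros) (auto simp: branch_cut_def)
  show "\<And>y. y \<in> S \<Longrightarrow> joukowski_inv y = zc y"
    using assms zc_eq_joukowski_inv by (metis disjoint_iff)
qed

lemma zc_joukowski:
  assumes "v \<noteq> 0" "cmod v < 1"
  shows "zc (joukowski v) = inverse v"
proof -
  have "zc (joukowski v) = v \<or> zc (joukowski v) * v = 1"
    using joukowski_eq_iff[OF zc_props(3) assms(1)] zc_props(2) by blast
  moreover have "zc (joukowski v) \<noteq> v" using zc_props(1) assms(2) by (metis not_le order_less_le_trans)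
  ultimately show ?thesis by (metis inverse_unique mult.commute)
qed

lemma sig_1: "sig 1 y = y"
  by (simp add: sig_eq_joukowski zc_props)

lemma sig_inverse_sig_ne:
  assumes "s \<noteq> 0" "cmod s < 1" "cmod v = 1"
  shows "sig (inverse s) (joukowski (s * v)) \<noteq> joukowski v"
proof
  have v0: "v \<noteq> 0" using assms(3) by auto
  have "zc (joukowski (s * v)) = inverse (s * v)"
    using assms v0 by (intro zc_joukowski) (auto simp: norm_mult)
  hence "sig (inverse s) (joukowski (s * v)) = joukowski (s * s * v)"
    by (metis sig_eq_joukowski joukowski_inverse inverse_mult_distrib mult.assoc)
  moreover assume "sig (inverse s) (joukowski (s * v)) = joukowski v"
  ultimately have "s * s = 1 \<or> s * s * v * v = 1"
    using joukowski_eq_iff[of "s * s * v" v] assms(1) v0 by simp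
  hence "cmod (s * s) = 1 \<or> cmod (s * s * v * v) = 1" by auto
  hence "cmod s * cmod s = 1" using assms(3) by (auto simp: norm_mult)
  thus False using assms(2) norm_ge_zero[of s]
    by (metis less_1_mult mult_less_cancel_right1 not_less_iff_gr_or_eq)
qed

lemma etaP_0 [simp]: "etaP q 0 f = f"
  by (rule ext) (simp add: etaP_def sig_1)

lemma R_ok_mono:
  assumes "R_ok q M R" "N \<le> M"
  shows "R_ok q N R"
proof -
  have "\<bar>a\<bar> \<le> int N \<Longrightarrow> \<bar>a\<bar> \<le> int M" for a :: int using assms(2) by simp
  thus ?thesis using assms unfolding R_ok_def by (meson order_trans)
qed

lemma R_ok_sig_add:
  assumes "R_ok q M R" "R < cmod y" "\<bar>a\<bar> \<le> int M" "\<bar>b\<bar> \<le> int M" "\<bar>a + b\<bar> \<le> int M"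
  shows "sig (csqrt q powi b) (sig (csqrt q powi a) y) = sig (csqrt q powi (a + b)) y"
proof -
  have "etaP q a (etaP q b id) y = etaP q (a + b) id y"
    using assms unfolding R_ok_def by blast
  thus ?thesis by (simp add: etaP_def)
qed

lemma csqrt_in_unit_disc:
  assumes "0 < cmod q" "cmod q < 1"
  shows "csqrt q \<noteq> 0" "cmod (csqrt q) < 1" "csqrt q * csqrt q \<noteq> 1"
  using assms power2_csqrt[of q] by (auto simp: power2_eq_square)

text \<open>The additivity of the shifts required by R_ok fails on the unit circle: sig s maps a
  point of it into the unit disk, where zc inverts it, so sig (inverse s) does not bring it back.\<close>
lemma R_ok_shift_not_unimodular:
  assumes ok: "R_ok q M R" and q: "0 < cmod q" "cmod q < 1" and w: "R < cmod w"
    and j: "\<bar>j\<bar> + 1 \<le> int M"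
  shows "cmod (csqrt q powi j * zc w) \<noteq> 1"
proof
  define s where "s = csqrt q"
  define v where "v = s powi j * zc w"
  assume "cmod (csqrt q powi j * zc w) = 1"
  hence v1: "cmod v = 1" by (simp add: v_def s_def)
  have s0: "s \<noteq> 0" and s1: "cmod s < 1" using csqrt_in_unit_disc[OF q] by (simp_all add: s_def)
  have "sig (csqrt q powi -1) (sig (csqrt q powi (j + 1)) w) = sig (csqrt q powi (j + 1 + -1)) w"
    using j by (intro R_ok_sig_add[OF ok w]) auto
  moreover have "s powi (j + 1) = s * s powi j" using s0 by (simp add: power_int_add)
  ultimately have "sig (inverse s) (joukowski (s * v)) = joukowski v"
    by (simp add: s_def v_def sig_eq_joukowski power_int_minus mult.assoc)
  thus False using sig_inverse_sig_ne[OF s0 s1 v1] by simp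
qed

lemma R_ok_notin_branch_cut:
  assumes ok: "R_ok q M R" "1 \<le> M" and q: "0 < cmod q" "cmod q < 1" and y: "R < cmod y"
  shows "y \<notin> branch_cut"
  using R_ok_shift_not_unimodular[OF ok(1) q y, of 0] zc_on_branch_cut(1)[of y] ok(2) by auto

lemma etaP_holomorphic:
  assumes f: "f holomorphic_on UNIV" and ok: "R_ok q M R" and q: "0 < cmod q" "cmod q < 1"
    and j: "\<bar>j\<bar> \<le> int M"
  shows "etaP q j f holomorphic_on {y. R < cmod y}"
proof (cases "j = 0")
  case True
  thus ?thesis using holomorphic_on_subset[OF f] by simp
next
  case False
  define c where "c = csqrt q powi j"
  have "c \<noteq> 0" using csqrt_in_unit_disc(1)[OF q] by (simp add: c_def)
  have "{y. R < cmod y} \<inter> branch_cut = {}" using R_ok_notin_branch_cut[OF ok _ q] False j by auto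
  hence "zc holomorphic_on {y. R < cmod y}" by (rule zc_holomorphic)
  hence "(\<lambda>y. joukowski (c * zc y)) holomorphic_on {y. R < cmod y}"
    unfolding joukowski_def using \<open>c \<noteq> 0\<close> zc_props(3) by (intro holomorphic_intros) auto
  hence "(f \<circ> (\<lambda>y. joukowski (c * zc y))) holomorphic_on {y. R < cmod y}"
    using f by (intro holomorphic_on_compose) (auto intro: holomorphic_on_subset)
  moreover have "etaP q j f = f \<circ> (\<lambda>y. joukowski (c * zc y))"
    by (rule ext) (simp add: etaP_def sig_eq_joukowski c_def)
  ultimately show ?thesis by simp
qed

lemma sig_powi_add:
  assumes "s \<noteq> 0"
  shows "sig (s powi (j + k)) w = joukowski (s powi k * (s powi j * zc w))"
  using assms by (simp add: sig_eq_joukowski power_int_add ac_simps)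

lemma R_ok_shift_square_ne_1:
  assumes "R_ok q M R" "0 < cmod q" "cmod q < 1" "R < cmod w" "\<bar>j\<bar> + 1 \<le> int M"
  shows "(csqrt q powi j * zc w) * (csqrt q powi j * zc w) \<noteq> 1"
  using R_ok_shift_not_unimodular[OF assms]
  by (metis abs_norm_cancel abs_square_eq_1 norm_mult norm_one power2_eq_square)

lemma etaP_AW_denominator_ne:
  assumes ok: "R_ok q M R" and q: "0 < cmod q" "cmod q < 1" and w: "R < cmod w"
    and j: "\<bar>j\<bar> + 1 \<le> int M"
  shows "etaP q (j + 1) id w \<noteq> etaP q (j - 1) id w"
proof
  define s where "s = csqrt q"
  define v where "v = s powi j * zc w"
  have s0: "s \<noteq> 0" and ss: "s * s \<noteq> 1" using csqrt_in_unit_disc[OF q] by (simp_all add: s_def)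
  have v0: "v \<noteq> 0" using s0 zc_props(3)[of w] by (simp add: v_def)
  have vv: "v * v \<noteq> 1" using R_ok_shift_square_ne_1[OF ok q w j] by (simp add: v_def s_def)
  assume "etaP q (j + 1) id w = etaP q (j - 1) id w"
  hence "joukowski (s * v) = joukowski (inverse s * v)"
    using sig_powi_add[OF s0, of j 1 w] sig_powi_add[OF s0, of j "-1" w]
    by (simp add: etaP_def s_def v_def power_int_minus)
  hence "s * v = inverse s * v \<or> s * v * (inverse s * v) = 1"
    using joukowski_eq_iff s0 v0 by simp
  thus False using s0 v0 ss vv by (auto simp: field_simps)
qed

lemma etaP_AW:
  assumes ok: "R_ok q M R" and q: "0 < cmod q" "cmod q < 1" and w: "R < cmod w"
    and j: "\<bar>j\<bar> + 1 \<le> int M"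
  shows "etaP q j (AW q F) w =
           (etaP q (j + 1) F w - etaP q (j - 1) F w) / (etaP q (j + 1) id w - etaP q (j - 1) id w)"
proof -
  define s where "s = csqrt q"
  define v where "v = s powi j * zc w"
  define y where "y = sig (s powi j) w"
  have s0: "s \<noteq> 0" using csqrt_in_unit_disc[OF q] by (simp add: s_def)
  have v0: "v \<noteq> 0" using s0 zc_props(3)[of w] by (simp add: v_def)
  have "v \<noteq> 1" "v \<noteq> -1" using R_ok_shift_square_ne_1[OF ok q w j] by (auto simp: v_def s_def)
  moreover have "y = joukowski v" "joukowski 1 = 1" "joukowski (-1) = -1"
    by (simp_all add: y_def v_def sig_eq_joukowski joukowski_def)
  ultimately have "y \<noteq> 1 \<and> y \<noteq> -1"
    using joukowski_eq_iff[OF v0, of 1] joukowski_eq_iff[OF v0, of "-1"]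
    by (auto simp: minus_equation_iff)
  hence "AW q F y = (F (sig s y) - F (sig (inverse s) y)) / (sig s y - sig (inverse s) y)"
    by (simp add: AW_def AW_quot_def eta_def etainv_def s_def)
  moreover have "sig s y = sig (s powi (j + 1)) w" "sig (inverse s) y = sig (s powi (j - 1)) w"
    using R_ok_sig_add[OF ok w, of j 1] R_ok_sig_add[OF ok w, of j "-1"] j
    by (simp_all add: y_def s_def power_int_minus)
  ultimately show ?thesis by (simp add: etaP_def y_def s_def)
qed

definition vanishes_to_order :: "(complex \<Rightarrow> complex) \<Rightarrow> complex \<Rightarrow> nat \<Rightarrow> bool" where
  "vanishes_to_order g x n \<longleftrightarrow>
     (\<exists>h r. 0 < r \<and> h holomorphic_on ball x r \<and> (\<forall>w\<in>ball x r. g w = (w - x) ^ n * h w))"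

lemma vanishes_to_order_0I:
  assumes "open S" "x \<in> S" "g holomorphic_on S"
  shows "vanishes_to_order g x 0"
proof -
  obtain r where "0 < r" "ball x r \<subseteq> S" using assms(1,2) open_contains_ball by blast
  thus ?thesis unfolding vanishes_to_order_def using assms(3)
    by (intro exI[of _ g] exI[of _ r]) (auto intro: holomorphic_on_subset)
qed

lemma vanishes_to_order_cong:
  assumes "open S" "x \<in> S" "\<And>w. w \<in> S \<Longrightarrow> g w = g' w"
  shows "vanishes_to_order g x n \<longleftrightarrow> vanishes_to_order g' x n"
proof -
  have transfer: "vanishes_to_order g' x n"
    if g: "vanishes_to_order g x n" and eq: "\<And>w. w \<in> S \<Longrightarrow> g w = g' w" for g g'
  proof -
    obtain h r where h: "0 < r" "h holomorphic_on ball x r" "\<forall>w\<in>ball x r. g w = (w - x) ^ n * h w"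
      using g unfolding vanishes_to_order_def by blast
    obtain r' where r': "0 < r'" "ball x r' \<subseteq> S" using assms(1,2) open_contains_ball by blast
    have "\<forall>w\<in>ball x (min r r'). g' w = (w - x) ^ n * h w"
    proof
      fix w assume "w \<in> ball x (min r r')"
      hence "w \<in> ball x r" "w \<in> S" using r'(2) by auto
      thus "g' w = (w - x) ^ n * h w" using h(3) eq by metis
    qed
    moreover have "h holomorphic_on ball x (min r r')" using h(2) by (rule holomorphic_on_subset) auto
    ultimately show ?thesis unfolding vanishes_to_order_def using h(1) r'(1)
      by (intro exI[of _ h] exI[of _ "min r r'"]) auto
  qed
  show ?thesis
  proof
    show "vanishes_to_order g' x n" if "vanishes_to_order g x n"
      using that assms(3) by (rule transfer)
    show "vanishes_to_order g x n" if "vanishes_to_order g' x n"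
      using that by (rule transfer) (simp add: assms(3))
  qed
qed

lemma vanishes_to_order_mono:
  assumes "vanishes_to_order g x k" "n \<le> k"
  shows "vanishes_to_order g x n"
proof -
  obtain h r where h: "0 < r" "h holomorphic_on ball x r" "\<forall>w\<in>ball x r. g w = (w - x) ^ k * h w"
    using assms(1) unfolding vanishes_to_order_def by blast
  have "(w - x) ^ k = (w - x) ^ n * (w - x) ^ (k - n)" for w
    using assms(2) by (simp flip: power_add)
  hence "\<forall>w\<in>ball x r. g w = (w - x) ^ n * ((w - x) ^ (k - n) * h w)" using h(3) by simp
  moreover have "(\<lambda>w. (w - x) ^ (k - n) * h w) holomorphic_on ball x r"
    using h(2) by (intro holomorphic_intros)
  ultimately show ?thesis unfolding vanishes_to_order_def using h(1) by blast
qed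

lemma vanishes_to_order_mult:
  assumes "vanishes_to_order g x a" "vanishes_to_order h x b"
  shows "vanishes_to_order (\<lambda>w. g w * h w) x (a + b)"
proof -
  obtain g' r1 where 1: "0 < r1" "g' holomorphic_on ball x r1" "\<forall>w\<in>ball x r1. g w = (w - x) ^ a * g' w"
    using assms(1) unfolding vanishes_to_order_def by blast
  obtain h' r2 where 2: "0 < r2" "h' holomorphic_on ball x r2" "\<forall>w\<in>ball x r2. h w = (w - x) ^ b * h' w"
    using assms(2) unfolding vanishes_to_order_def by blast
  define r where "r = min r1 r2"
  have "(\<lambda>w. g' w * h' w) holomorphic_on ball x r"
    using 1(2) 2(2) by (intro holomorphic_intros) (auto simp: r_def intro: holomorphic_on_subset)
  moreover have "\<forall>w\<in>ball x r. g w * h w = (w - x) ^ (a + b) * (g' w * h' w)"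
    using 1(3) 2(3) by (simp add: r_def power_add algebra_simps)
  ultimately show ?thesis unfolding vanishes_to_order_def using 1(1) 2(1) r_def
    by (intro exI[of _ "\<lambda>w. g' w * h' w"] exI[of _ r]) auto
qed

lemma vanishes_to_order_prod:
  assumes "finite I" "\<And>i. i \<in> I \<Longrightarrow> vanishes_to_order (g i) x (k i)"
  shows "vanishes_to_order (\<lambda>w. \<Prod>i\<in>I. g i w) x (\<Sum>i\<in>I. k i)"
  using assms
proof (induction I rule: finite_induct)
  case empty
  show ?case by (simp add: vanishes_to_order_0I[of UNIV])
next
  case (insert i I)
  thus ?case using vanishes_to_order_mult[of "g i" x "k i"] by simp
qed

lemma vanishes_to_order_lincomb:
  assumes "vanishes_to_order g x n" "vanishes_to_order h x n"
  shows "vanishes_to_order (\<lambda>w. a * g w + b * h w) x n"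
proof -
  obtain g' r1 where 1: "0 < r1" "g' holomorphic_on ball x r1" "\<forall>w\<in>ball x r1. g w = (w - x) ^ n * g' w"
    using assms(1) unfolding vanishes_to_order_def by blast
  obtain h' r2 where 2: "0 < r2" "h' holomorphic_on ball x r2" "\<forall>w\<in>ball x r2. h w = (w - x) ^ n * h' w"
    using assms(2) unfolding vanishes_to_order_def by blast
  define r where "r = min r1 r2"
  have "(\<lambda>w. a * g' w + b * h' w) holomorphic_on ball x r"
    using 1(2) 2(2) by (intro holomorphic_intros) (auto simp: r_def intro: holomorphic_on_subset)
  moreover have "\<forall>w\<in>ball x r. a * g w + b * h w = (w - x) ^ n * (a * g' w + b * h' w)"
    using 1(3) 2(3) by (simp add: r_def algebra_simps)
  ultimately show ?thesis unfolding vanishes_to_order_def using 1(1) 2(1) r_def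
    by (intro exI[of _ "\<lambda>w. a * g' w + b * h' w"] exI[of _ r]) auto
qed

lemma vanishes_to_order_add:
  "vanishes_to_order g x n \<Longrightarrow> vanishes_to_order h x n \<Longrightarrow> vanishes_to_order (\<lambda>w. g w + h w) x n"
  using vanishes_to_order_lincomb[of g x n h 1 1] by simp

lemma vanishes_to_order_diff:
  "vanishes_to_order g x n \<Longrightarrow> vanishes_to_order h x n \<Longrightarrow> vanishes_to_order (\<lambda>w. g w - h w) x n"
  using vanishes_to_order_lincomb[of g x n h 1 "-1"] by simp

lemma vanishes_to_order_mult_nonzero_iff:
  assumes "open S" "x \<in> S" "c holomorphic_on S" "\<And>w. w \<in> S \<Longrightarrow> c w \<noteq> 0"
  shows "vanishes_to_order (\<lambda>w. c w * g w) x n \<longleftrightarrow> vanishes_to_order g x n"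
proof
  have "vanishes_to_order (\<lambda>w. inverse (c w)) x 0"
    using assms by (intro vanishes_to_order_0I[of S] holomorphic_intros) auto
  moreover assume "vanishes_to_order (\<lambda>w. c w * g w) x n"
  ultimately have "vanishes_to_order (\<lambda>w. inverse (c w) * (c w * g w)) x n"
    using vanishes_to_order_mult by fastforce
  thus "vanishes_to_order g x n"
    using vanishes_to_order_cong[OF assms(1,2), of "\<lambda>w. inverse (c w) * (c w * g w)" g n] assms(4)
    by simp
next
  have "vanishes_to_order c x 0" using assms by (intro vanishes_to_order_0I[of S])
  moreover assume "vanishes_to_order g x n"
  ultimately show "vanishes_to_order (\<lambda>w. c w * g w) x n"
    using vanishes_to_order_mult by fastforce
qed

lemma vanishes_to_order_cmult_iff:
  assumes "c \<noteq> 0"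
  shows "vanishes_to_order (\<lambda>w. c * g w) x n \<longleftrightarrow> vanishes_to_order g x n"
  using vanishes_to_order_mult_nonzero_iff[of UNIV x "\<lambda>_. c"] assms by simp

lemma vanishes_to_order_telescope:
  "(\<forall>i\<le>m. vanishes_to_order (h i) x n) \<longleftrightarrow>
     vanishes_to_order (\<lambda>w. h m w + h 0 w) x n \<and>
     (\<forall>i<m. vanishes_to_order (\<lambda>w. h (Suc i) w - h i w) x n)"
proof (intro iffI conjI allI impI)
  assume diffs: "vanishes_to_order (\<lambda>w. h m w + h 0 w) x n \<and>
     (\<forall>i<m. vanishes_to_order (\<lambda>w. h (Suc i) w - h i w) x n)"
  have partial: "vanishes_to_order (\<lambda>w. h i w - h 0 w) x n" if "i \<le> m" for i
    using that
  proof (induction i)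
    case 0
    show ?case unfolding vanishes_to_order_def by (intro exI[of _ "\<lambda>_. 0"] exI[of _ 1]) auto
  next
    case (Suc i)
    hence "vanishes_to_order (\<lambda>w. (h (Suc i) w - h i w) + (h i w - h 0 w)) x n"
      using diffs by (intro vanishes_to_order_add) auto
    thus ?case by simp
  qed
  have "vanishes_to_order (\<lambda>w. (h m w + h 0 w) - (h m w - h 0 w)) x n"
    using vanishes_to_order_diff[OF conjunct1[OF diffs] partial[OF order_refl]] .
  moreover have "(\<lambda>w. (h m w + h 0 w) - (h m w - h 0 w)) = (\<lambda>w. 2 * h 0 w)"
    by (simp add: fun_eq_iff)
  ultimately have h0: "vanishes_to_order (h 0) x n"
    using vanishes_to_order_cmult_iff[of 2 "h 0" x n] by simp
  fix i assume "i \<le> m"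
  hence "vanishes_to_order (\<lambda>w. (h i w - h 0 w) + h 0 w) x n"
    using partial h0 by (intro vanishes_to_order_add)
  thus "vanishes_to_order (h i) x n" by simp
next
  assume "\<forall>i\<le>m. vanishes_to_order (h i) x n"
  thus "vanishes_to_order (\<lambda>w. h m w + h 0 w) x n"
    "\<And>i. i < m \<Longrightarrow> vanishes_to_order (\<lambda>w. h (Suc i) w - h i w) x n"
    by (auto intro: vanishes_to_order_add vanishes_to_order_diff)
qed

lemma open_norm_gt: "open {y :: 'a::real_normed_vector. R < norm y}"
proof -
  have "{y :: 'a. R < norm y} = - cball 0 R" by (auto simp: dist_norm)
  thus ?thesis by (simp add: open_Compl)
qed

text \<open>The exponents j for which eta_{q^j} f enters A_{q^{M-t}} D_q^t f for some t \<le> M.\<close>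
definition shift_range :: "nat \<Rightarrow> int set" where
  "shift_range M = {j. \<bar>j\<bar> \<le> int M \<and> even (j + int M)}"

lemma shift_range_eq_image: "shift_range M = (\<lambda>i. 2 * int i - int M) ` {..M}"
proof (intro set_eqI iffI)
  fix j assume "j \<in> shift_range M"
  hence "even (j + int M)" "\<bar>j\<bar> \<le> int M" by (simp_all add: shift_range_def)
  then obtain k where k: "j + int M = 2 * k" by (metis evenE)
  hence "j = 2 * int (nat k) - int M" "nat k \<le> M" using \<open>\<bar>j\<bar> \<le> int M\<close> by auto
  thus "j \<in> (\<lambda>i. 2 * int i - int M) ` {..M}" by force
qed (auto simp: shift_range_def)

lemma ball_shift_range: "(\<forall>j\<in>shift_range M. P j) \<longleftrightarrow> (\<forall>i\<le>M. P (2 * int i - int M))"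
  by (auto simp: shift_range_eq_image)

lemma shift_range_finite_nonempty: "finite (shift_range M)" "shift_range M \<noteq> {}"
  by (simp_all add: shift_range_eq_image)

lemma vanishes_etaP_AW_iff:
  assumes q: "0 < cmod q" "cmod q < 1" and ok: "R_ok q M R" and x: "R < cmod x"
    and j: "\<bar>j\<bar> + 1 \<le> int M"
  shows "vanishes_to_order (etaP q j (AW q F)) x n \<longleftrightarrow>
         vanishes_to_order (\<lambda>w. etaP q (j + 1) F w - etaP q (j - 1) F w) x n"
proof -
  define S where "S = {y. R < cmod y}"
  define d where "d w = etaP q (j + 1) id w - etaP q (j - 1) id w" for w
  have S: "open S" "x \<in> S" using x open_norm_gt by (auto simp: S_def)
  have "etaP q (j + 1) id holomorphic_on S" "etaP q (j - 1) id holomorphic_on S"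
    using j by (auto simp: S_def intro!: etaP_holomorphic[OF _ ok q])
  hence "d holomorphic_on S" unfolding d_def[abs_def] by (rule holomorphic_on_diff)
  moreover have "d w \<noteq> 0" if "w \<in> S" for w
    using etaP_AW_denominator_ne[OF ok q _ j] that by (simp add: d_def S_def)
  ultimately have "vanishes_to_order (\<lambda>w. d w * etaP q j (AW q F) w) x n \<longleftrightarrow>
                   vanishes_to_order (etaP q j (AW q F)) x n"
    using S by (intro vanishes_to_order_mult_nonzero_iff) auto
  moreover have "d w * etaP q j (AW q F) w = etaP q (j + 1) F w - etaP q (j - 1) F w" if "w \<in> S" for w
    using etaP_AW_denominator_ne[OF ok q _ j, of w] etaP_AW[OF ok q _ j, of w F] that
    by (simp add: d_def S_def)
  hence "vanishes_to_order (\<lambda>w. d w * etaP q j (AW q F) w) x n \<longleftrightarrow>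
         vanishes_to_order (\<lambda>w. etaP q (j + 1) F w - etaP q (j - 1) F w) x n"
    by (rule vanishes_to_order_cong[OF S])
  ultimately show ?thesis by simp
qed

lemma vanishes_shifts_iff_vanishes_AW:
  assumes q: "0 < cmod q" "cmod q < 1" and x: "R < cmod x"
  shows "R_ok q M R \<Longrightarrow>
    (\<forall>j\<in>shift_range M. vanishes_to_order (etaP q j F) x n) \<longleftrightarrow>
    (\<forall>t\<in>{..M}. vanishes_to_order (Aop q (M - t) ((AW q ^^ t) F)) x n)"
proof (induction M arbitrary: F)
  case 0
  have "shift_range 0 = {0}" "Aop q 0 F = F" by (auto simp: shift_range_def Aop_def fun_eq_iff)
  thus ?case by simp
next
  case (Suc N)
  define h where "h i = etaP q (2 * int i - int (Suc N)) F" for i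
  have "(\<forall>t\<in>{..Suc N}. vanishes_to_order (Aop q (Suc N - t) ((AW q ^^ t) F)) x n) \<longleftrightarrow>
        vanishes_to_order (Aop q (Suc N) F) x n \<and>
        (\<forall>t\<in>{..N}. vanishes_to_order (Aop q (N - t) ((AW q ^^ t) (AW q F))) x n)"
    by (simp add: atMost_Suc_eq_insert_0 funpow_Suc_right del: funpow.simps)
  also have "\<dots> \<longleftrightarrow> vanishes_to_order (Aop q (Suc N) F) x n \<and>
        (\<forall>j\<in>shift_range N. vanishes_to_order (etaP q j (AW q F)) x n)"
    using Suc.IH[of "AW q F"] R_ok_mono[OF Suc.prems] by simp
  also have "\<dots> \<longleftrightarrow> vanishes_to_order (\<lambda>w. h (Suc N) w + h 0 w) x n \<and>
        (\<forall>i<Suc N. vanishes_to_order (\<lambda>w. h (Suc i) w - h i w) x n)"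
  proof -
    have "Aop q (Suc N) F = (\<lambda>w. (1/2) * (h (Suc N) w + h 0 w))"
      by (simp add: Aop_def h_def fun_eq_iff field_simps)
    moreover have "vanishes_to_order (etaP q (2 * int i - int N) (AW q F)) x n \<longleftrightarrow>
        vanishes_to_order (\<lambda>w. h (Suc i) w - h i w) x n" if "i < Suc N" for i
      using vanishes_etaP_AW_iff[OF q Suc.prems x, of "2 * int i - int N"] that
      by (simp add: h_def algebra_simps)
    ultimately show ?thesis using vanishes_to_order_cmult_iff[of "1/2"]
      by (simp add: ball_shift_range less_Suc_eq_le)
  qed
  also have "\<dots> \<longleftrightarrow> (\<forall>i\<le>Suc N. vanishes_to_order (h i) x n)"
    by (rule vanishes_to_order_telescope[symmetric])
  also have "\<dots> \<longleftrightarrow> (\<forall>j\<in>shift_range (Suc N). vanishes_to_order (etaP q j F) x n)"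
    by (simp add: ball_shift_range h_def)
  finally show ?case ..
qed

lemma nu0_eq_Sup: "nu0 g x = Sup {enat n | n. vanishes_to_order g x n}"
  by (simp add: nu0_def vanishes_to_order_def)

text \<open>The order-0 hypothesis matters: nu0 g x = 0 also when g is not holomorphic near x.\<close>
lemma enat_le_nu0_iff:
  assumes "vanishes_to_order g x 0"
  shows "enat n \<le> nu0 g x \<longleftrightarrow> vanishes_to_order g x n"
proof
  assume "vanishes_to_order g x n"
  thus "enat n \<le> nu0 g x" unfolding nu0_eq_Sup by (auto intro: Sup_upper)
next
  assume le: "enat n \<le> nu0 g x"
  show "vanishes_to_order g x n"
  proof (cases n)
    case 0
    thus ?thesis using assms by simp
  next
    case (Suc k)
    hence "enat k < Sup {enat n | n. vanishes_to_order g x n}"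
      using le unfolding nu0_eq_Sup by (meson enat_ord_simps(2) lessI order_less_le_trans)
    then obtain l where "vanishes_to_order g x l" "k < l" by (auto simp: less_Sup_iff)
    thus ?thesis using Suc by (auto intro: vanishes_to_order_mono)
  qed
qed

lemma enat_leI:
  fixes a b :: enat
  assumes "\<And>n. enat n \<le> a \<Longrightarrow> enat n \<le> b"
  shows "a \<le> b"
proof (cases b)
  case (enat k)
  hence "\<not> enat (Suc k) \<le> a" using assms[of "Suc k"] by auto
  thus ?thesis using enat by (cases a) auto
qed simp

lemma enat_le_add_split:
  assumes "enat n \<le> a + b"
  obtains k l where "n = k + l" "enat k \<le> a" "enat l \<le> b"
proof (cases a)
  case (enat i)
  moreover have "enat (n - min n i) \<le> b" using assms enat by (cases b) auto
  ultimately show ?thesis by (intro that[of "min n i" "n - min n i"]) auto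
next
  case infinity
  thus ?thesis by (intro that[of n 0]) (auto simp: zero_enat_def[symmetric])
qed

lemma nu0_mult_ge:
  assumes "vanishes_to_order g x 0" "vanishes_to_order h x 0"
  shows "nu0 g x + nu0 h x \<le> nu0 (\<lambda>w. g w * h w) x"
proof (rule enat_leI)
  have gh: "vanishes_to_order (\<lambda>w. g w * h w) x 0" using vanishes_to_order_mult[OF assms] by simp
  fix n assume "enat n \<le> nu0 g x + nu0 h x"
  then obtain k l where "n = k + l" "enat k \<le> nu0 g x" "enat l \<le> nu0 h x"
    by (rule enat_le_add_split)
  thus "enat n \<le> nu0 (\<lambda>w. g w * h w) x"
    using assms gh by (simp add: enat_le_nu0_iff vanishes_to_order_mult)
qed

lemma nu0_prod_ge:
  assumes "finite I" "\<And>i. i \<in> I \<Longrightarrow> vanishes_to_order (g i) x 0"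
  shows "(\<Sum>i\<in>I. nu0 (g i) x) \<le> nu0 (\<lambda>w. \<Prod>i\<in>I. g i w) x"
  using assms
proof (induction I rule: finite_induct)
  case (insert i I)
  have "vanishes_to_order (\<lambda>w. \<Prod>i\<in>I. g i w) x 0"
    using vanishes_to_order_prod[of I g x "\<lambda>_. 0"] insert by simp
  hence "nu0 (g i) x + nu0 (\<lambda>w. \<Prod>i\<in>I. g i w) x \<le> nu0 (\<lambda>w. g i w * (\<Prod>i\<in>I. g i w)) x"
    using insert by (intro nu0_mult_ge) auto
  moreover have "(\<Sum>i\<in>I. nu0 (g i) x) \<le> nu0 (\<lambda>w. \<Prod>i\<in>I. g i w) x" using insert by simp
  ultimately have "nu0 (g i) x + (\<Sum>i\<in>I. nu0 (g i) x) \<le> nu0 (\<lambda>w. g i w * (\<Prod>i\<in>I. g i w)) x"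
    by (meson add_left_mono order_trans)
  thus ?case using insert by simp
qed simp

lemma Min_image_mono:
  assumes "finite A" "A \<noteq> {}" "\<And>a. a \<in> A \<Longrightarrow> f a \<le> g a"
  shows "(MIN a\<in>A. f a) \<le> (MIN a\<in>A. g a)"
proof -
  have "(MIN a\<in>A. f a) \<le> g a" if "a \<in> A" for a
    using assms that by (meson Min_le finite_imageI image_eqI order_trans)
  thus ?thesis using assms by simp
qed

lemma sum_Min_le_Min_sum:
  fixes f :: "'i \<Rightarrow> 'a \<Rightarrow> 'b::{ordered_comm_monoid_add, linorder}"
  assumes "finite A" "A \<noteq> {}"
  shows "(\<Sum>i\<in>I. MIN a\<in>A. f i a) \<le> (MIN a\<in>A. \<Sum>i\<in>I. f i a)"
proof -
  have "(\<Sum>i\<in>I. MIN a\<in>A. f i a) \<le> (\<Sum>i\<in>I. f i a)" if "a \<in> A" for a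
    using assms that by (intro sum_mono) simp
  thus ?thesis using assms by simp
qed

lemma etaP_prod: "etaP q j (\<lambda>y. \<Prod>i\<in>I. f i y) = (\<lambda>w. \<Prod>i\<in>I. etaP q j (f i) w)"
  by (rule ext) (simp add: etaP_def)

lemma entire_etaP_vanishes_to_order_0:
  assumes "f holomorphic_on UNIV" "R_ok q M R" "0 < cmod q" "cmod q < 1" "R < cmod x"
    and "j \<in> shift_range M"
  shows "vanishes_to_order (etaP q j f) x 0"
  using etaP_holomorphic[OF assms(1-4)] assms(5,6)
  by (intro vanishes_to_order_0I[of "{y. R < cmod y}"] open_norm_gt) (auto simp: shift_range_def)

lemma Min_nu0_AW_eq_Min_nu0_etaP:
  assumes q: "0 < cmod q" "cmod q < 1" and ok: "R_ok q M R" and x: "R < cmod x"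
    and hol: "\<And>j. j \<in> shift_range M \<Longrightarrow> vanishes_to_order (etaP q j F) x 0"
  shows "(MIN t\<in>{0..M}. nu0 (Aop q (M - t) ((AW q ^^ t) F)) x) =
         (MIN j\<in>shift_range M. nu0 (etaP q j F) x)"
proof -
  note equiv = vanishes_shifts_iff_vanishes_AW[OF q x ok, of F]
  have "\<forall>t\<in>{..M}. vanishes_to_order (Aop q (M - t) ((AW q ^^ t) F)) x 0"
    using equiv[of 0] hol by blast
  hence "enat n \<le> (MIN t\<in>{0..M}. nu0 (Aop q (M - t) ((AW q ^^ t) F)) x) \<longleftrightarrow>
         enat n \<le> (MIN j\<in>shift_range M. nu0 (etaP q j F) x)" for n
    using equiv[of n] hol shift_range_finite_nonempty
    by (simp add: enat_le_nu0_iff atLeast0AtMost)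
  thus ?thesis by (meson antisym enat_leI)
qed

theorem lemma6p4:
  fixes q :: complex and M m :: nat and fs :: "nat \<Rightarrow> complex \<Rightarrow> complex"
    and R :: real and x :: complex
  assumes "0 < cmod q" and "cmod q < 1"
    and "\<forall>i\<in>{1..m}. fs i holomorphic_on UNIV"
    and "R_ok q M R"
    and "R < cmod x"
  shows "(MIN t\<in>{0..M}. nu0 (Aop q (M - t) ((AW q ^^ t) (\<lambda>y. \<Prod>i=1..m. fs i y))) x)
         \<ge> (\<Sum>i=1..m. MIN t\<in>{0..M}. nu0 (Aop q (M - t) ((AW q ^^ t) (fs i))) x)"
proof -
  let ?J = "shift_range M" and ?f = "\<lambda>y. \<Prod>i=1..m. fs i y"
  note shift_vanishes_0 = entire_etaP_vanishes_to_order_0[OF _ assms(4,1,2,5)]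
  have entire: "?f holomorphic_on UNIV" using assms(3) by (intro holomorphic_on_prod) auto
  have "(\<Sum>i=1..m. MIN t\<in>{0..M}. nu0 (Aop q (M - t) ((AW q ^^ t) (fs i))) x) =
        (\<Sum>i=1..m. MIN j\<in>?J. nu0 (etaP q j (fs i)) x)"
    using assms(3)
    by (intro sum.cong refl Min_nu0_AW_eq_Min_nu0_etaP[OF assms(1,2,4,5)] shift_vanishes_0) auto
  also have "\<dots> \<le> (MIN j\<in>?J. \<Sum>i=1..m. nu0 (etaP q j (fs i)) x)"
    by (rule sum_Min_le_Min_sum) (use shift_range_finite_nonempty in auto)
  also have "\<dots> \<le> (MIN j\<in>?J. nu0 (etaP q j ?f) x)"
    unfolding etaP_prod using assms(3) shift_range_finite_nonempty
    by (intro Min_image_mono nu0_prod_ge shift_vanishes_0) auto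
  also have "\<dots> = (MIN t\<in>{0..M}. nu0 (Aop q (M - t) ((AW q ^^ t) ?f)) x)"
    by (intro Min_nu0_AW_eq_Min_nu0_etaP[OF assms(1,2,4,5), symmetric] shift_vanishes_0 entire)
  finally show ?thesis .
qed

end
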